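(* Let $G$ be a bus graph containing a $(B,o)$-flipper (as defined below), a $\mathcal{C}$-vertex $i$ joined to the flipper by the edge $(B,i)$, and a $\mathcal{B}$-vertex $O$ joined to the flipper by the edge $(O,o)$. Then in any realization $\Gamma$ of $G$: (1) $\Gamma((B,i))$ and $\Gamma((O,o))$ are perpendicular; (2) $\Gamma(B)$ and $\Gamma(O)$ are perpendicular.
   Context: A bus graph is a finite bipartite graph $G=(\mathcal{B},\mathcal{C};\mathcal{E})$ with $\deg(c)\le 4$ for all $c\in\mathcal{C}$. A realization $\Gamma$ of $G$ in the integer grid is a drawing such that: (1) each $B\in\mathcal{B}$ is drawn as a closed line segment $\Gamma(B)$ along a grid line (a "bus"); (2) each $c\in\mathcal{C}$ is drawn as a grid point $\Gamma(c)$; (3) each edge $(B,c)\in\mathcal{E}$ is drawn as a closed line segment along a grid line between a point of $\Gamma(B)$ and $\Gamma(c)$, perpendicular to $\Gamma(B)$, containing no connectors or buses other than $\Gamma(B)$ and $\Gamma(c)$ (edges may cross other edges); (4) no two buses or connectors intersect. An $(A,B)$-perp consists of three distinct $\mathcal{C}$-vertices $x,y,z$, five distinct $\mathcal{B}$-vertices $A,A',B,B',C$, and the twelve edges $(A,x),(A',x),(B,x),(B',x)$, $(A,y),(A',y),(B,y),(C,y)$, $(A,z),(A',z),(B',z),(C,z)$. A $(B,o)$-flipper consists of an $(A,B)$-perp together with one additional $\mathcal{C}$-vertex $o$ and two additional edges $(B,o)$ and $(B',o)$. *)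

theory Defs
  imports Main
begin

text \<open>A bus is drawn as a closed axis-parallel
segment with integer data: orientation (horizontal or vertical), the coordinate of
the grid line carrying it, and the interval [lo, hi] along that line.\<close>

type_synonym pt = "int \<times> int"

record bus_seg =
  horiz :: bool
  gline :: int
  lo :: int
  hi :: int

definition seg_pts :: "bus_seg \<Rightarrow> pt set" where
  "seg_pts s = (if horiz s then {(x, gline s) | x. lo s \<le> x \<and> x \<le> hi s}
                else {(gline s, y) | y. lo s \<le> y \<and> y \<le> hi s})"

definition foot :: "bus_seg \<Rightarrow> pt \<Rightarrow> pt" where
  "foot s p = (if horiz s then (fst p, gline s) else (gline s, snd p))"

definition edge_pts :: "bus_seg \<Rightarrow> pt \<Rightarrow> pt set" where
  "edge_pts s p = (if horiz s
      then {(fst p, y) | y. min (gline s) (snd p) \<le> y \<and> y \<le> max (gline s) (snd p)}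
      else {(x, snd p) | x. min (gline s) (fst p) \<le> x \<and> x \<le> max (gline s) (fst p)})"

definition edge_horiz :: "bus_seg \<Rightarrow> bool" where
  "edge_horiz s = (\<not> horiz s)"

definition bus_graph :: "'b set \<Rightarrow> 'c set \<Rightarrow> ('b \<times> 'c) set \<Rightarrow> bool" where
  "bus_graph Bs Cs E \<longleftrightarrow> finite Bs \<and> finite Cs \<and> E \<subseteq> Bs \<times> Cs \<and>
     (\<forall>c\<in>Cs. card {b. (b, c) \<in> E} \<le> 4)"

definition realization ::
  "'b set \<Rightarrow> 'c set \<Rightarrow> ('b \<times> 'c) set \<Rightarrow> ('b \<Rightarrow> bus_seg) \<Rightarrow> ('c \<Rightarrow> pt) \<Rightarrow> bool" where
  "realization Bs Cs E \<Gamma>b \<Gamma>c \<longleftrightarrow>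
     (\<forall>b\<in>Bs. lo (\<Gamma>b b) \<le> hi (\<Gamma>b b)) \<and>
     (\<forall>(b, c)\<in>E. foot (\<Gamma>b b) (\<Gamma>c c) \<in> seg_pts (\<Gamma>b b)) \<and>
     (\<forall>(b, c)\<in>E. \<forall>c'\<in>Cs. c' \<noteq> c \<longrightarrow> \<Gamma>c c' \<notin> edge_pts (\<Gamma>b b) (\<Gamma>c c)) \<and>
     (\<forall>(b, c)\<in>E. \<forall>b'\<in>Bs. b' \<noteq> b \<longrightarrow>
         edge_pts (\<Gamma>b b) (\<Gamma>c c) \<inter> seg_pts (\<Gamma>b b') = {}) \<and>
     inj_on \<Gamma>c Cs \<and>
     (\<forall>b\<in>Bs. \<forall>b'\<in>Bs. b \<noteq> b' \<longrightarrow> seg_pts (\<Gamma>b b) \<inter> seg_pts (\<Gamma>b b') = {}) \<and>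
     (\<forall>b\<in>Bs. \<forall>c\<in>Cs. \<Gamma>c c \<notin> seg_pts (\<Gamma>b b))"

definition perp ::
  "('b \<times> 'c) set \<Rightarrow> 'c \<Rightarrow> 'c \<Rightarrow> 'c \<Rightarrow> 'b \<Rightarrow> 'b \<Rightarrow> 'b \<Rightarrow> 'b \<Rightarrow> 'b \<Rightarrow> bool" where
  "perp E x y z A A' B B' C \<longleftrightarrow>
     distinct [x, y, z] \<and> distinct [A, A', B, B', C] \<and>
     {(A,x),(A',x),(B,x),(B',x),(A,y),(A',y),(B,y),(C,y),(A,z),(A',z),(B',z),(C,z)} \<subseteq> E"

definition flipper ::
  "('b \<times> 'c) set \<Rightarrow> 'c \<Rightarrow> 'c \<Rightarrow> 'c \<Rightarrow> 'c \<Rightarrow> 'b \<Rightarrow> 'b \<Rightarrow> 'b \<Rightarrow> 'b \<Rightarrow> 'b \<Rightarrow> bool" where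
  "flipper E x y z ov A A' B B' C \<longleftrightarrow>
     perp E x y z A A' B B' C \<and> ov \<notin> {x, y, z} \<and> (B, ov) \<in> E \<and> (B', ov) \<in> E"

end

theory Submission
  imports Defs
begin

text \<open>Two parallel buses adjacent to a common connector p lie on opposite sides of p:
otherwise the edge from the farther bus to p would run through the nearer bus.  Hence a
connector meets at most two buses of each orientation, and the four buses at a connector
of degree four split two and two.  At each of the connectors x, y, z of the perp, A and A'
are parallel iff the other two buses are; comparing the three instances forces B, B' and C
to be parallel.  O, adjacent to o together with B and B', is then perpendicular to B.
Edges are perpendicular to their buses, so the edges of B and O are perpendicular as well,
whichever connectors they lead to.\<close>

definition transverse_coord :: "bus_seg \<Rightarrow> pt \<Rightarrow> int" where
  "transverse_coord s p = (if horiz s then snd p else fst p)"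

lemma transverse_coord_parallel:
  "horiz s1 = horiz s2 \<Longrightarrow> transverse_coord s1 p = transverse_coord s2 p"
  by (simp add: transverse_coord_def)

lemma foot_in_edge_pts:
  assumes "horiz s1 = horiz s2"
    and "min (gline s2) (transverse_coord s2 p) \<le> gline s1"
    and "gline s1 \<le> max (gline s2) (transverse_coord s2 p)"
  shows "foot s1 p \<in> edge_pts s2 p"
  using assms by (auto simp: foot_def edge_pts_def transverse_coord_def)

lemma bus_graph_edgeD:
  "bus_graph Bs Cs E \<Longrightarrow> (b, c) \<in> E \<Longrightarrow> b \<in> Bs \<and> c \<in> Cs"
  by (auto simp: bus_graph_def)

lemma realization_foot_on_bus:
  "realization Bs Cs E \<Gamma>b \<Gamma>c \<Longrightarrow> (b, c) \<in> E \<Longrightarrow> foot (\<Gamma>b b) (\<Gamma>c c) \<in> seg_pts (\<Gamma>b b)"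
  unfolding realization_def by blast

lemma realization_edge_avoids_buses:
  "realization Bs Cs E \<Gamma>b \<Gamma>c \<Longrightarrow> (b, c) \<in> E \<Longrightarrow> b' \<in> Bs \<Longrightarrow> b' \<noteq> b \<Longrightarrow>
    edge_pts (\<Gamma>b b) (\<Gamma>c c) \<inter> seg_pts (\<Gamma>b b') = {}"
  unfolding realization_def by blast

lemma realization_connector_off_buses:
  "realization Bs Cs E \<Gamma>b \<Gamma>c \<Longrightarrow> b \<in> Bs \<Longrightarrow> c \<in> Cs \<Longrightarrow> \<Gamma>c c \<notin> seg_pts (\<Gamma>b b)"
  unfolding realization_def by blast

lemma connector_off_bus_line:
  assumes "bus_graph Bs Cs E" and "realization Bs Cs E \<Gamma>b \<Gamma>c" and "(b, c) \<in> E"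
  shows "gline (\<Gamma>b b) \<noteq> transverse_coord (\<Gamma>b b) (\<Gamma>c c)"
proof
  assume "gline (\<Gamma>b b) = transverse_coord (\<Gamma>b b) (\<Gamma>c c)"
  then have "foot (\<Gamma>b b) (\<Gamma>c c) = \<Gamma>c c"
    by (auto simp: foot_def transverse_coord_def)
  then show False
    using realization_foot_on_bus[OF assms(2,3)] realization_connector_off_buses[OF assms(2)]
      bus_graph_edgeD[OF assms(1,3)]
    by simp
qed

lemma nearer_parallel_bus_blocks_edge:
  assumes "bus_graph Bs Cs E" and "realization Bs Cs E \<Gamma>b \<Gamma>c"
    and "(b1, c) \<in> E" and "(b2, c) \<in> E" and "b1 \<noteq> b2"
    and "horiz (\<Gamma>b b1) = horiz (\<Gamma>b b2)"
    and "min (gline (\<Gamma>b b2)) (transverse_coord (\<Gamma>b b2) (\<Gamma>c c)) \<le> gline (\<Gamma>b b1)"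
    and "gline (\<Gamma>b b1) \<le> max (gline (\<Gamma>b b2)) (transverse_coord (\<Gamma>b b2) (\<Gamma>c c))"
  shows False
proof -
  have "foot (\<Gamma>b b1) (\<Gamma>c c) \<in> seg_pts (\<Gamma>b b1)"
    using assms(2,3) by (rule realization_foot_on_bus)
  moreover have "foot (\<Gamma>b b1) (\<Gamma>c c) \<in> edge_pts (\<Gamma>b b2) (\<Gamma>c c)"
    using assms(6-8) by (rule foot_in_edge_pts)
  moreover have "edge_pts (\<Gamma>b b2) (\<Gamma>c c) \<inter> seg_pts (\<Gamma>b b1) = {}"
    using realization_edge_avoids_buses[OF assms(2,4)] bus_graph_edgeD[OF assms(1,3)] assms(5)
    by blast
  ultimately show False by blast
qed

lemma parallel_buses_opposite_sides:
  assumes bg: "bus_graph Bs Cs E" and r: "realization Bs Cs E \<Gamma>b \<Gamma>c"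
    and e1: "(b1, c) \<in> E" and e2: "(b2, c) \<in> E" and "b1 \<noteq> b2"
    and par: "horiz (\<Gamma>b b1) = horiz (\<Gamma>b b2)"
  shows "(gline (\<Gamma>b b1) < transverse_coord (\<Gamma>b b1) (\<Gamma>c c))
    \<noteq> (gline (\<Gamma>b b2) < transverse_coord (\<Gamma>b b1) (\<Gamma>c c))"
proof
  define k where "k = transverse_coord (\<Gamma>b b1) (\<Gamma>c c)"
  have k2: "transverse_coord (\<Gamma>b b2) (\<Gamma>c c) = k"
    unfolding k_def using par[symmetric] by (rule transverse_coord_parallel)
  have "gline (\<Gamma>b b1) \<noteq> k" "gline (\<Gamma>b b2) \<noteq> k"
    using connector_off_bus_line[OF bg r e1] connector_off_bus_line[OF bg r e2] k2
    by (auto simp: k_def)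
  moreover assume "(gline (\<Gamma>b b1) < k) = (gline (\<Gamma>b b2) < k)"
  ultimately have
      "min (gline (\<Gamma>b b2)) k \<le> gline (\<Gamma>b b1) \<and> gline (\<Gamma>b b1) \<le> max (gline (\<Gamma>b b2)) k
    \<or> min (gline (\<Gamma>b b1)) k \<le> gline (\<Gamma>b b2) \<and> gline (\<Gamma>b b2) \<le> max (gline (\<Gamma>b b1)) k"
    by (auto simp: min_def max_def)
  then show False
  proof
    assume "min (gline (\<Gamma>b b2)) k \<le> gline (\<Gamma>b b1) \<and> gline (\<Gamma>b b1) \<le> max (gline (\<Gamma>b b2)) k"
    then show False
      using nearer_parallel_bus_blocks_edge[OF bg r e1 e2 \<open>b1 \<noteq> b2\<close> par] k2 by simp
  next
    assume "min (gline (\<Gamma>b b1)) k \<le> gline (\<Gamma>b b2) \<and> gline (\<Gamma>b b2) \<le> max (gline (\<Gamma>b b1)) k"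
    then show False
      using nearer_parallel_bus_blocks_edge[OF bg r e2 e1 \<open>b1 \<noteq> b2\<close>[symmetric] par[symmetric]]
      by (simp add: k_def)
  qed
qed

lemma three_buses_at_connector_not_parallel:
  assumes bg: "bus_graph Bs Cs E" and r: "realization Bs Cs E \<Gamma>b \<Gamma>c"
    and "distinct [b1, b2, b3]" and e1: "(b1, c) \<in> E" and e2: "(b2, c) \<in> E" and e3: "(b3, c) \<in> E"
  shows "\<not> (horiz (\<Gamma>b b1) = horiz (\<Gamma>b b2) \<and> horiz (\<Gamma>b b2) = horiz (\<Gamma>b b3))"
proof
  assume par: "horiz (\<Gamma>b b1) = horiz (\<Gamma>b b2) \<and> horiz (\<Gamma>b b2) = horiz (\<Gamma>b b3)"
  define side where "side b \<longleftrightarrow> gline (\<Gamma>b b) < transverse_coord (\<Gamma>b b1) (\<Gamma>c c)" for b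
  have "side b1 \<noteq> side b2"
    using parallel_buses_opposite_sides[OF bg r e1 e2] assms(3) par by (simp add: side_def)
  moreover have "side b1 \<noteq> side b3"
    using parallel_buses_opposite_sides[OF bg r e1 e3] assms(3) par by (simp add: side_def)
  moreover have "side b2 \<noteq> side b3"
    using parallel_buses_opposite_sides[OF bg r e2 e3] assms(3) par
    by (simp add: side_def transverse_coord_parallel[of "\<Gamma>b b2" "\<Gamma>b b1"])
  ultimately show False by blast
qed

lemma four_buses_at_connector_parallel_iff:
  assumes bg: "bus_graph Bs Cs E" and r: "realization Bs Cs E \<Gamma>b \<Gamma>c"
    and "distinct [b1, b2, b3, b4]"
    and "(b1, c) \<in> E" "(b2, c) \<in> E" "(b3, c) \<in> E" "(b4, c) \<in> E"
  shows "(horiz (\<Gamma>b b1) = horiz (\<Gamma>b b2)) = (horiz (\<Gamma>b b3) = horiz (\<Gamma>b b4))"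
proof -
  note no_three = three_buses_at_connector_not_parallel[OF bg r]
  have "\<not> (horiz (\<Gamma>b b1) = horiz (\<Gamma>b b2) \<and> horiz (\<Gamma>b b2) = horiz (\<Gamma>b b3))"
    "\<not> (horiz (\<Gamma>b b1) = horiz (\<Gamma>b b2) \<and> horiz (\<Gamma>b b2) = horiz (\<Gamma>b b4))"
    "\<not> (horiz (\<Gamma>b b1) = horiz (\<Gamma>b b3) \<and> horiz (\<Gamma>b b3) = horiz (\<Gamma>b b4))"
    "\<not> (horiz (\<Gamma>b b2) = horiz (\<Gamma>b b3) \<and> horiz (\<Gamma>b b3) = horiz (\<Gamma>b b4))"
    by (rule no_three; use assms in auto)+
  then show ?thesis by blast
qed

lemma perp_buses_parallel:
  assumes bg: "bus_graph Bs Cs E" and r: "realization Bs Cs E \<Gamma>b \<Gamma>c"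
    and "perp E x y z A A' B B' C"
  shows "horiz (\<Gamma>b B) = horiz (\<Gamma>b B')"
proof -
  note split = four_buses_at_connector_parallel_iff[OF bg r]
  have perp_edges: "distinct [A, A', B, B', C]"
    "{(A,x),(A',x),(B,x),(B',x),(A,y),(A',y),(B,y),(C,y),(A,z),(A',z),(B',z),(C,z)} \<subseteq> E"
    using assms(3) by (auto simp: perp_def)
  have "(horiz (\<Gamma>b A) = horiz (\<Gamma>b A')) = (horiz (\<Gamma>b B) = horiz (\<Gamma>b B'))"
    by (rule split[where c = x]) (use perp_edges in auto)
  moreover have "(horiz (\<Gamma>b A) = horiz (\<Gamma>b A')) = (horiz (\<Gamma>b B) = horiz (\<Gamma>b C))"
    by (rule split[where c = y]) (use perp_edges in auto)
  moreover have "(horiz (\<Gamma>b A) = horiz (\<Gamma>b A')) = (horiz (\<Gamma>b B') = horiz (\<Gamma>b C))"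
    by (rule split[where c = z]) (use perp_edges in auto)
  ultimately show ?thesis by blast
qed

theorem lemma4:
  fixes Bs :: "'b set" and Cs :: "'c set" and E :: "('b \<times> 'c) set"
    and \<Gamma>b :: "'b \<Rightarrow> bus_seg" and \<Gamma>c :: "'c \<Rightarrow> pt"
  assumes "bus_graph Bs Cs E"
    and "flipper E x y z ov A A' B B' C"
    and "i \<notin> {x, y, z, ov}" and "(B, i) \<in> E"
    and "OB \<notin> {A, A', B, B', C}" and "(OB, ov) \<in> E"
    and "realization Bs Cs E \<Gamma>b \<Gamma>c"
  shows "edge_horiz (\<Gamma>b B) \<noteq> edge_horiz (\<Gamma>b OB) \<and> horiz (\<Gamma>b B) \<noteq> horiz (\<Gamma>b OB)"
proof -
  have perp: "perp E x y z A A' B B' C" and "(B, ov) \<in> E" "(B', ov) \<in> E"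
    using assms(2) by (auto simp: flipper_def)
  then have "distinct [B, B', OB]"
    using assms(5) by (auto simp: perp_def)
  then have "\<not> (horiz (\<Gamma>b B) = horiz (\<Gamma>b B') \<and> horiz (\<Gamma>b B') = horiz (\<Gamma>b OB))"
    using three_buses_at_connector_not_parallel[OF assms(1,7)] \<open>(B, ov) \<in> E\<close> \<open>(B', ov) \<in> E\<close> assms(6)
    by blast
  moreover have "horiz (\<Gamma>b B) = horiz (\<Gamma>b B')"
    using perp_buses_parallel[OF assms(1,7) perp] .
  ultimately show ?thesis by (auto simp: edge_horiz_def)
qed

end
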